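(* Let $\Gamma$ be a tetravalent (simple) graph admitting a subgroup $G \leq \mathrm{Aut}(\Gamma)$ acting regularly on the set of arcs of $\Gamma$. Then $\Gamma$ has exactly three $G$-orbits of $G$-consistent cycles, all of which are $G$-symmetric, if and only if the vertex stabilizers in $G$ are isomorphic to the Klein $4$-group $\mathbb{Z}_2\times\mathbb{Z}_2$.
   Context: An arc of a graph is an ordered pair of adjacent vertices. For an arc-transitive group $G$ of automorphisms of $\Gamma$, a directed cycle $\vec C=(v_0,v_1,\ldots,v_{r-1})$ (a connected $2$-valent subgraph with one of its two orientations) is $G$-consistent if some $g\in G$ maps each $v_i$ to $v_{i+1}$ (indices mod $r$); such $g$ is a shunt. An undirected cycle is $G$-consistent if its two orientations are $G$-consistent. A $G$-consistent cycle is $G$-symmetric if some element of $G$ maps $\vec C$ to its reverse $(v_0,v_{r-1},\ldots,v_1)$, and $G$-chiral otherwise. $G$ acts naturally on the set of $G$-consistent cycles. *)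

theory Defs
  imports "HOL-Algebra.Elementary_Groups"
begin

definition simple_graph :: "'a set \<Rightarrow> ('a \<Rightarrow> 'a \<Rightarrow> bool) \<Rightarrow> bool" where
  "simple_graph V E \<longleftrightarrow> finite V \<and>
     (\<forall>u v. E u v \<longrightarrow> u \<in> V \<and> v \<in> V) \<and>
     (\<forall>u v. E u v \<longrightarrow> E v u) \<and> (\<forall>u. \<not> E u u)"

definition tetravalent :: "'a set \<Rightarrow> ('a \<Rightarrow> 'a \<Rightarrow> bool) \<Rightarrow> bool" where
  "tetravalent V E \<longleftrightarrow> (\<forall>v\<in>V. card {u. E v u} = 4)"

definition is_aut :: "'a set \<Rightarrow> ('a \<Rightarrow> 'a \<Rightarrow> bool) \<Rightarrow> ('a \<Rightarrow> 'a) \<Rightarrow> bool" where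
  "is_aut V E g \<longleftrightarrow> bij_betw g V V \<and> (\<forall>x. x \<notin> V \<longrightarrow> g x = x) \<and>
     (\<forall>u\<in>V. \<forall>v\<in>V. E u v \<longleftrightarrow> E (g u) (g v))"

definition perm_inv :: "'a set \<Rightarrow> ('a \<Rightarrow> 'a) \<Rightarrow> ('a \<Rightarrow> 'a)" where
  "perm_inv V g = (\<lambda>x. if x \<in> V then inv_into V g x else x)"

definition aut_subgroup :: "'a set \<Rightarrow> ('a \<Rightarrow> 'a \<Rightarrow> bool) \<Rightarrow> ('a \<Rightarrow> 'a) set \<Rightarrow> bool" where
  "aut_subgroup V E G \<longleftrightarrow> (\<forall>g\<in>G. is_aut V E g) \<and> id \<in> G \<and>
     (\<forall>g\<in>G. \<forall>h\<in>G. g \<circ> h \<in> G) \<and> (\<forall>g\<in>G. perm_inv V g \<in> G)"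

definition arc_regular :: "'a set \<Rightarrow> ('a \<Rightarrow> 'a \<Rightarrow> bool) \<Rightarrow> ('a \<Rightarrow> 'a) set \<Rightarrow> bool" where
  "arc_regular V E G \<longleftrightarrow>
     (\<forall>u v x y. E u v \<longrightarrow> E x y \<longrightarrow> (\<exists>!g. g \<in> G \<and> g u = x \<and> g v = y))"

text \<open>A directed cycle (v_0,...,v_{r-1}) given as a list; it is represented
  (independently of the starting vertex) by its set of arcs.\<close>

definition is_dcycle_list :: "'a set \<Rightarrow> ('a \<Rightarrow> 'a \<Rightarrow> bool) \<Rightarrow> 'a list \<Rightarrow> bool" where
  "is_dcycle_list V E xs \<longleftrightarrow> length xs \<ge> 3 \<and> distinct xs \<and> set xs \<subseteq> V \<and>
     (\<forall>i<length xs. E (xs ! i) (xs ! ((i + 1) mod length xs)))"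

definition cycle_arcs :: "'a list \<Rightarrow> ('a \<times> 'a) set" where
  "cycle_arcs xs = {(xs ! i, xs ! ((i + 1) mod length xs)) | i. i < length xs}"

definition is_shunt :: "('a \<Rightarrow> 'a) \<Rightarrow> 'a list \<Rightarrow> bool" where
  "is_shunt g xs \<longleftrightarrow> (\<forall>i<length xs. g (xs ! i) = xs ! ((i + 1) mod length xs))"

definition consistent_dcycle ::
  "'a set \<Rightarrow> ('a \<Rightarrow> 'a \<Rightarrow> bool) \<Rightarrow> ('a \<Rightarrow> 'a) set \<Rightarrow> ('a \<times> 'a) set \<Rightarrow> bool" where
  "consistent_dcycle V E G D \<longleftrightarrow>
     (\<exists>xs. is_dcycle_list V E xs \<and> D = cycle_arcs xs \<and> (\<exists>g\<in>G. is_shunt g xs))"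

definition undirect :: "('a \<times> 'a) set \<Rightarrow> 'a set set" where
  "undirect D = (\<lambda>(u, v). {u, v}) ` D"

definition consistent_ucycle ::
  "'a set \<Rightarrow> ('a \<Rightarrow> 'a \<Rightarrow> bool) \<Rightarrow> ('a \<Rightarrow> 'a) set \<Rightarrow> 'a set set \<Rightarrow> bool" where
  "consistent_ucycle V E G C \<longleftrightarrow>
     (\<exists>D. C = undirect D \<and> consistent_dcycle V E G D \<and> consistent_dcycle V E G (converse D))"

definition symmetric_ucycle ::
  "'a set \<Rightarrow> ('a \<Rightarrow> 'a \<Rightarrow> bool) \<Rightarrow> ('a \<Rightarrow> 'a) set \<Rightarrow> 'a set set \<Rightarrow> bool" where
  "symmetric_ucycle V E G C \<longleftrightarrow>
     (\<exists>D. C = undirect D \<and> consistent_dcycle V E G D \<and>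
        (\<exists>g\<in>G. map_prod g g ` D = converse D))"

definition ucycle_image :: "('a \<Rightarrow> 'a) \<Rightarrow> 'a set set \<Rightarrow> 'a set set" where
  "ucycle_image g C = (\<lambda>e. g ` e) ` C"

definition ucycle_orbit :: "('a \<Rightarrow> 'a) set \<Rightarrow> 'a set set \<Rightarrow> 'a set set set" where
  "ucycle_orbit G C = {ucycle_image g C | g. g \<in> G}"

definition consistent_orbits ::
  "'a set \<Rightarrow> ('a \<Rightarrow> 'a \<Rightarrow> bool) \<Rightarrow> ('a \<Rightarrow> 'a) set \<Rightarrow> 'a set set set set" where
  "consistent_orbits V E G = {ucycle_orbit G C | C. consistent_ucycle V E G C}"

definition stabilizer_group :: "('a \<Rightarrow> 'a) set \<Rightarrow> 'a \<Rightarrow> ('a \<Rightarrow> 'a) monoid" where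
  "stabilizer_group G v = \<lparr>carrier = {g \<in> G. g v = v}, monoid.mult = (\<circ>), one = id\<rparr>"

end

(* Fix an arc (u, v) and the element a of G swapping u and v. By arc-regularity every G-consistent
   directed cycle is conjugate to the cycle traced by a shunt s with s u = v, and these shunts
   correspond bijectively to the neighbours s v of v other than u. The cycle of s is reversed by an
   element of G iff (s a)^2 = 1, and s a runs through the stabiliser G_v, a group of order 4. So all
   consistent cycles are symmetric iff G_v has exponent 2, i.e. is a Klein four-group, and then the
   orbits of consistent cycles correspond to the three neighbours of v other than u. *)

theory Submission
  imports Defs "HOL-Combinatorics.Orbits"
begin

lemma carrier_Z2_Z2:
  "carrier (integer_mod_group 2 \<times>\<times> integer_mod_group 2) = {(0, 0), (0, 1), (1, 0), (1, 1)}"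
  by (auto simp: carrier_integer_mod_group)

lemma (in group) Z2_Z2_iso_of_generators:
  assumes square: "\<forall>x\<in>carrier G. x \<otimes> x = \<one>" and order: "card (carrier G) = 4"
    and a: "a \<in> carrier G" "a \<noteq> \<one>" and b: "b \<in> carrier G" "b \<noteq> \<one>" "b \<noteq> a"
  shows "(\<lambda>(i, j). (if i = 1 then a else \<one>) \<otimes> (if j = 1 then b else \<one>))
    \<in> iso (integer_mod_group 2 \<times>\<times> integer_mod_group 2) G"
    (is "?\<psi> \<in> iso ?K G")
proof -
  have cancel: "x \<otimes> (x \<otimes> y) = y" if "x \<in> carrier G" "y \<in> carrier G" for x y
    using square that by (simp add: m_assoc[symmetric])
  have ab_square: "a \<otimes> (b \<otimes> (a \<otimes> b)) = \<one>" using square a b by (metis m_assoc m_closed)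
  then have bab: "b \<otimes> (a \<otimes> b) = a" using cancel[of a "b \<otimes> (a \<otimes> b)"] a b by simp
  then have comm: "b \<otimes> a = a \<otimes> b" using cancel[of b "a \<otimes> b"] a b by simp
  have ab: "a \<otimes> b \<noteq> \<one>" "a \<otimes> b \<noteq> a" "a \<otimes> b \<noteq> b"
    using cancel[of a b] cancel[of b a] a b square comm by (metis r_one)+
  have image: "?\<psi> ` carrier ?K = {\<one>, b, a, a \<otimes> b}"
    unfolding carrier_Z2_Z2 by (simp add: a b insert_commute)
  have "?\<psi> \<in> hom ?K G"
  proof (rule homI)
    fix x assume "x \<in> carrier ?K"
    then have "?\<psi> x \<in> {\<one>, b, a, a \<otimes> b}" using image by blast
    then show "?\<psi> x \<in> carrier G" using a b by auto
  next
    fix x y assume "x \<in> carrier ?K" "y \<in> carrier ?K"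
    then show "?\<psi> (x \<otimes>\<^bsub>?K\<^esub> y) = ?\<psi> x \<otimes> ?\<psi> y"
      using square a b unfolding carrier_Z2_Z2 by (auto simp: m_assoc comm cancel ab_square bab)
  qed
  moreover have "?\<psi> ` carrier ?K = carrier G"
    using image a b ab order by (intro card_subset_eq) (auto intro: card_ge_0_finite)
  moreover have "inj_on ?\<psi> (carrier ?K)"
  proof -
    have "card (?\<psi> ` carrier ?K) = 4" using image a b ab by simp
    moreover have "finite (carrier ?K)" "card (carrier ?K) = 4"
      unfolding carrier_Z2_Z2 by simp_all
    ultimately show ?thesis using inj_on_iff_eq_card by metis
  qed
  ultimately show ?thesis by (simp add: iso_iff)
qed

lemma (in group) iso_Z2_Z2_iff_exponent_two:
  assumes order: "card (carrier G) = 4"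
  shows "G \<cong> integer_mod_group 2 \<times>\<times> integer_mod_group 2 \<longleftrightarrow> (\<forall>x\<in>carrier G. x \<otimes> x = \<one>)"
    (is "G \<cong> ?K \<longleftrightarrow> _")
proof
  assume "G \<cong> ?K"
  then obtain \<phi> where "\<phi> \<in> iso G ?K" unfolding is_iso_def by blast
  then have hom: "\<phi> \<in> hom G ?K" and inj: "inj_on \<phi> (carrier G)"
    by (auto simp: iso_def bij_betw_def)
  have square: "\<phi> (x \<otimes> x) = (0, 0)" if "x \<in> carrier G" for x
    using hom_mult[OF hom that that] hom_in_carrier[OF hom that] by (auto simp: carrier_Z2_Z2)
  show "\<forall>x\<in>carrier G. x \<otimes> x = \<one>"
    using square inj_onD[OF inj] by (metis l_one one_closed m_closed)
next
  assume square: "\<forall>x\<in>carrier G. x \<otimes> x = \<one>"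
  have fin: "finite (carrier G)" using order by (intro card_ge_0_finite) simp
  have "card (carrier G - {\<one>}) = 3" using order fin by (simp add: card_Diff_singleton)
  then obtain a where "a \<in> carrier G - {\<one>}" by (metis card.empty ex_in_conv zero_neq_numeral)
  then have a: "a \<in> carrier G" "a \<noteq> \<one>" by simp_all
  have "card (carrier G - {\<one>, a}) = 2" using order fin a by (simp add: card_Diff_subset)
  then obtain b where "b \<in> carrier G - {\<one>, a}" by (metis card.empty ex_in_conv zero_neq_numeral)
  then have b: "b \<in> carrier G" "b \<noteq> \<one>" "b \<noteq> a" by simp_all
  have "?K \<cong> G" using Z2_Z2_iso_of_generators[OF square order a b] by (rule is_isoI)
  then show "G \<cong> ?K"
    using group.iso_sym[OF DirProd_group[OF group_integer_mod_group group_integer_mod_group]] by blast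
qed

(* From here on inv is the inverse of a function, not HOL-Algebra's group inverse. *)
unbundle no m_inv_syntax

definition orbit_arcs :: "('a \<Rightarrow> 'a) \<Rightarrow> 'a \<Rightarrow> ('a \<times> 'a) set" where
  "orbit_arcs g x = (\<lambda>y. (y, g y)) ` orbit g x"

lemma orbit_arcs_iff: "(y, z) \<in> orbit_arcs g x \<longleftrightarrow> y \<in> orbit g x \<and> z = g y"
  by (auto simp: orbit_arcs_def)

lemma funpow_shunt_nth:
  assumes "is_shunt g xs" "xs \<noteq> []"
  shows "(g ^^ i) (xs ! 0) = xs ! (i mod length xs)"
proof (induction i)
  case (Suc i)
  have "(g ^^ Suc i) (xs ! 0) = g (xs ! (i mod length xs))" using Suc by simp
  also have "\<dots> = xs ! ((i mod length xs + 1) mod length xs)"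
    using assms by (simp add: is_shunt_def)
  finally show ?case by (simp add: mod_Suc_eq)
qed simp

lemma orbit_shunt:
  assumes "is_shunt g xs" "xs \<noteq> []"
  shows "orbit g (xs ! 0) = set xs"
proof -
  have "xs ! i \<in> orbit g (xs ! 0)" if "i < length xs" for i
    using funpow_shunt_nth[OF assms, of "i + length xs"] that assms(2)
    by (auto simp: orbit_altdef intro!: exI[of _ "i + length xs"])
  moreover have "orbit g (xs ! 0) \<subseteq> set xs"
    using assms(2) by (auto simp: orbit_altdef funpow_shunt_nth[OF assms])
  ultimately show ?thesis by (auto simp: in_set_conv_nth)
qed

lemma cycle_arcs_shunt:
  assumes "is_shunt g xs" "xs \<noteq> []"
  shows "cycle_arcs xs = orbit_arcs g (xs ! 0)"
proof -
  have "cycle_arcs xs = {(xs ! i, g (xs ! i)) | i. i < length xs}"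
    using assms(1) by (auto simp: cycle_arcs_def is_shunt_def)
  also have "\<dots> = (\<lambda>y. (y, g y)) ` set xs" by (fastforce simp: in_set_conv_nth)
  finally show ?thesis by (simp add: orbit_arcs_def orbit_shunt[OF assms])
qed

lemma shunt_list_of_orbit:
  assumes "x \<in> orbit g x"
  obtains xs where "distinct xs" "xs ! 0 = x" "set xs = orbit g x" "is_shunt g xs"
proof
  define n where "n = funpow_dist1 g x x"
  define xs where "xs = map (\<lambda>i. (g ^^ i) x) [0..<n]"
  have period: "(g ^^ n) x = x"
    unfolding n_def using funpow_dist1_prop[OF assms] .
  have "inj_on (\<lambda>i. (g ^^ i) x) {0..<n}"
    unfolding n_def by (rule inj_on_funpow_dist1[OF assms])
  then show "distinct xs" by (simp add: xs_def distinct_map)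
  have "0 < n" by (simp add: n_def)
  then show "xs ! 0 = x" by (simp add: xs_def)
  have "orbit g x = (\<lambda>i. (g ^^ i) x) ` {0..<n}"
    unfolding n_def by (rule orbit_conv_funpow_dist1[OF assms])
  then show "set xs = orbit g x" by (simp add: xs_def)
  show "is_shunt g xs"
    unfolding is_shunt_def
  proof (intro allI impI)
    fix i assume "i < length xs"
    then have "i < n" by (simp add: xs_def)
    then show "g (xs ! i) = xs ! ((i + 1) mod length xs)"
      using period by (cases "i + 1 = n") (auto simp: xs_def)
  qed
qed

lemma three_le_length_distinct:
  assumes "distinct xs" "{x, y, z} \<subseteq> set xs" "x \<noteq> y" "y \<noteq> z" "x \<noteq> z"
  shows "3 \<le> length xs"
proof -
  have "card {x, y, z} \<le> card (set xs)" using assms(2) by (rule card_mono[OF finite_set])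
  then show ?thesis using assms by (simp add: distinct_card)
qed

lemma converse_orbit_arcs:
  assumes "permutation g"
  shows "converse (orbit_arcs g x) = orbit_arcs (inv g) (g x)"
proof -
  have inv: "inv g (g y) = y" "g (inv g y) = y" for y
    using permutation_bijective[OF assms] by (simp_all add: bij_is_inj bij_is_surj surj_f_inv_f)
  have orb: "orbit (inv g) (g x) = orbit g x"
    using orbit_inv_eq[OF assms] permutation_orbit_step[OF assms] by simp
  have "inv g z \<in> orbit g x" if "z \<in> orbit g x" for z
    using orbit.step[OF that[folded orb]] orb by simp
  then show ?thesis
    unfolding orbit_arcs_def orb using inv by (auto intro: orbit.step image_eqI)
qed

lemma image_orbit_arcs:
  assumes "permutation g" "bij k"
  shows "map_prod k k ` orbit_arcs g x = orbit_arcs (k \<circ> g \<circ> inv k) (k x)"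
proof -
  have conj: "(k \<circ> g \<circ> inv k) (k y) = k (g y)" for y
    using bij_is_inj[OF assms(2)] by simp
  have orbit_image: "k ` orbit g x = orbit (k \<circ> g \<circ> inv k) (k x)"
    using orbit_inverse[OF permutation_self_in_orbit[OF assms(1)], where g' = "k \<circ> g \<circ> inv k"]
      conj by blast
  then show ?thesis
    unfolding orbit_arcs_def
    by (simp add: image_image orbit_image[symmetric] conj[symmetric] del: comp_apply)
qed

lemma image_map_prod_converse: "map_prod f f ` converse X = converse (map_prod f f ` X)"
  by auto

lemma doubleton_in_undirect_iff: "{x, y} \<in> undirect D \<longleftrightarrow> (x, y) \<in> D \<or> (y, x) \<in> D"
  unfolding undirect_def by (auto simp: doubleton_eq_iff)

lemma undirect_converse: "undirect (converse D) = undirect D"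
  unfolding undirect_def by (auto simp: insert_commute)

lemma ucycle_image_undirect: "ucycle_image k (undirect D) = undirect (map_prod k k ` D)"
  unfolding ucycle_image_def undirect_def image_image by (simp add: case_prod_beta)

lemma reversal_conjugate:
  assumes "bij k" "map_prod g g ` map_prod k k ` D = converse (map_prod k k ` D)"
  shows "map_prod (inv k \<circ> g \<circ> k) (inv k \<circ> g \<circ> k) ` D = converse D"
proof -
  have "map_prod (inv k \<circ> g \<circ> k) (inv k \<circ> g \<circ> k) ` D
      = map_prod (inv k) (inv k) ` map_prod g g ` map_prod k k ` D"
    by (simp only: image_comp map_prod.comp comp_assoc)
  also have "\<dots> = converse (map_prod (inv k) (inv k) ` map_prod k k ` D)"
    using assms(2) image_map_prod_converse by metis
  also have "map_prod (inv k) (inv k) ` map_prod k k ` D = D"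
    by (simp only: image_comp map_prod.comp inv_o_cancel[OF bij_is_inj[OF assms(1)]]
        map_prod.id image_id id_apply)
  finally show ?thesis .
qed

locale arc_regular_graph =
  fixes V :: "'a set" and E :: "'a \<Rightarrow> 'a \<Rightarrow> bool" and G :: "('a \<Rightarrow> 'a) set"
  assumes graph: "simple_graph V E"
    and subgroup: "aut_subgroup V E G"
    and regular: "arc_regular V E G"
begin

lemma finite_vertices: "finite V"
  using graph by (simp add: simple_graph_def)

lemma edge_vertices: "E x y \<Longrightarrow> x \<in> V \<and> y \<in> V"
  using graph by (simp add: simple_graph_def)

lemma edge_sym: "E x y \<Longrightarrow> E y x"
  using graph by (simp add: simple_graph_def)

lemma edge_irrefl: "\<not> E x x"
  using graph by (simp add: simple_graph_def)

lemma G_aut: "g \<in> G \<Longrightarrow> is_aut V E g"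
  using subgroup by (simp add: aut_subgroup_def)

lemma G_permutes: "g \<in> G \<Longrightarrow> g permutes V"
  using G_aut by (simp add: is_aut_def bij_imp_permutes)

lemma G_permutation: "g \<in> G \<Longrightarrow> permutation g"
  using G_permutes finite_vertices by (auto simp: permutation_permutes)

lemma G_bij: "g \<in> G \<Longrightarrow> bij g"
  using G_permutes by (rule permutes_bij)

lemma G_edge: "g \<in> G \<Longrightarrow> E x y \<Longrightarrow> E (g x) (g y)"
  using G_aut edge_vertices unfolding is_aut_def by blast

lemma G_id: "id \<in> G"
  using subgroup by (simp add: aut_subgroup_def)

lemma G_comp: "g \<in> G \<Longrightarrow> h \<in> G \<Longrightarrow> g \<circ> h \<in> G"
  using subgroup by (simp add: aut_subgroup_def)

lemma G_funpow: "g \<in> G \<Longrightarrow> g ^^ n \<in> G"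
  by (induction n) (auto simp: G_id G_comp)

lemma G_inv: assumes "g \<in> G" shows "inv g \<in> G"
proof -
  have perm: "g permutes V" using G_permutes[OF assms] .
  have "perm_inv V g = inv g"
  proof
    fix x show "perm_inv V g x = inv g x"
    proof (cases "x \<in> V")
      case True
      then have "g (inv_into V g x) = x" using permutes_image[OF perm] by (metis f_inv_into_f)
      then show ?thesis using True permutes_inv_eq[OF perm] by (metis perm_inv_def)
    next
      case False
      then show ?thesis using permutes_inv_eq[OF perm] permutes_not_in[OF perm] by (metis perm_inv_def)
    qed
  qed
  moreover have "perm_inv V g \<in> G" using subgroup assms unfolding aut_subgroup_def by blast
  ultimately show ?thesis by simp
qed

lemma G_eq_on_arc: "g \<in> G \<Longrightarrow> h \<in> G \<Longrightarrow> E x y \<Longrightarrow> g x = h x \<Longrightarrow> g y = h y \<Longrightarrow> g = h"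
  using regular G_edge unfolding arc_regular_def by metis

lemma G_arc_transitive:
  assumes "E x y" "E p q"
  obtains g where "g \<in> G" "g x = p" "g y = q"
  using regular assms unfolding arc_regular_def by metis

lemma bij_betw_eval_arc:
  assumes "E x y"
  shows "bij_betw (\<lambda>g. g y) {g \<in> G. g x = p} {q. E p q}"
proof (rule bij_betwI')
  fix g h assume "g \<in> {g \<in> G. g x = p}" "h \<in> {g \<in> G. g x = p}"
  then have "g \<in> G" "h \<in> G" "g x = h x" by simp_all
  then show "g y = h y \<longleftrightarrow> g = h" using G_eq_on_arc[OF _ _ assms] by blast
next
  fix g assume "g \<in> {g \<in> G. g x = p}"
  then show "g y \<in> {q. E p q}" using G_edge[OF _ assms] by force
next
  fix q assume "q \<in> {q. E p q}"
  then have "E p q" by simp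
  then obtain g where "g \<in> G" "g x = p" "g y = q" by (rule G_arc_transitive[OF assms])
  then show "\<exists>g\<in>{g \<in> G. g x = p}. q = g y" by blast
qed

lemma edge_along_orbit:
  assumes "g \<in> G" "E x (g x)" "y \<in> orbit g x"
  shows "E y (g y)"
  using assms(3) by induction (use assms G_edge in blast)+

lemma consistent_dcycle_orbit_arcs:
  assumes g: "g \<in> G" and edge: "E x (g x)" and not_back: "g (g x) \<noteq> x"
  shows "consistent_dcycle V E G (orbit_arcs g x)"
proof -
  have self: "x \<in> orbit g x" using permutation_self_in_orbit[OF G_permutation[OF g]] .
  obtain xs where xs: "distinct xs" "xs ! 0 = x" "set xs = orbit g x" "is_shunt g xs"
    using shunt_list_of_orbit[OF self] .
  have "xs \<noteq> []" using xs(3) self by auto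
  have "{x, g x, g (g x)} \<subseteq> set xs" using xs(3) self by (auto intro: orbit.intros)
  moreover have "x \<noteq> g x" "g x \<noteq> g (g x)"
    using edge G_edge[OF g edge] edge_irrefl by metis+
  ultimately have "3 \<le> length xs"
    using three_le_length_distinct[OF xs(1)] not_back by metis
  moreover have "set xs \<subseteq> V"
    using xs(3) permutes_orbit_subset[OF G_permutes[OF g]] edge_vertices[OF edge] by simp
  moreover have "E (xs ! i) (xs ! ((i + 1) mod length xs))" if "i < length xs" for i
  proof -
    have "xs ! i \<in> orbit g x" using xs(3) that by (metis nth_mem)
    moreover have "g (xs ! i) = xs ! ((i + 1) mod length xs)"
      using xs(4) that by (simp add: is_shunt_def)
    ultimately show ?thesis using edge_along_orbit[OF g edge] by metis
  qed
  ultimately have "is_dcycle_list V E xs" using xs(1) by (simp add: is_dcycle_list_def)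
  then show ?thesis
    unfolding consistent_dcycle_def using g xs(4) cycle_arcs_shunt[OF xs(4) \<open>xs \<noteq> []\<close>] xs(2)
    by metis
qed

lemma consistent_dcycleE:
  assumes "consistent_dcycle V E G D"
  obtains g x where "g \<in> G" "E x (g x)" "g (g x) \<noteq> x" "D = orbit_arcs g x"
proof -
  obtain xs g where xs: "is_dcycle_list V E xs" "D = cycle_arcs xs" and g: "g \<in> G" "is_shunt g xs"
    using assms unfolding consistent_dcycle_def by blast
  let ?n = "length xs"
  have n: "3 \<le> ?n" "distinct xs" and edges: "\<forall>i<?n. E (xs ! i) (xs ! ((i + 1) mod ?n))"
    using xs(1) by (auto simp: is_dcycle_list_def)
  then have "xs \<noteq> []" by auto
  have "g (xs ! 0) = xs ! 1" "g (g (xs ! 0)) = xs ! 2"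
    using funpow_shunt_nth[OF g(2) \<open>xs \<noteq> []\<close>, of 1] funpow_shunt_nth[OF g(2) \<open>xs \<noteq> []\<close>, of 2] n
    by (simp_all add: numeral_2_eq_2)
  moreover have "E (xs ! 0) (xs ! 1)" using edges[rule_format, of 0] n \<open>xs \<noteq> []\<close> by simp
  moreover have "xs ! 2 \<noteq> xs ! 0" using n nth_eq_iff_index_eq[OF n(2), of 2 0] \<open>xs \<noteq> []\<close> by simp
  ultimately show ?thesis
    using that g(1) xs(2) cycle_arcs_shunt[OF g(2) \<open>xs \<noteq> []\<close>] by metis
qed

lemma consistent_dcycle_converse:
  assumes "consistent_dcycle V E G D"
  shows "consistent_dcycle V E G (converse D)"
proof -
  obtain g x where g: "g \<in> G" "E x (g x)" "g (g x) \<noteq> x" "D = orbit_arcs g x"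
    using assms by (rule consistent_dcycleE)
  have inv: "inv g (g y) = y" "g (inv g y) = y" for y
    using G_bij[OF g(1)] by (simp_all add: bij_is_inj bij_is_surj surj_f_inv_f)
  have "converse D = orbit_arcs (inv g) (g x)"
    using converse_orbit_arcs[OF G_permutation[OF g(1)]] g(4) by simp
  moreover have "E (g x) (inv g (g x))" using inv edge_sym[OF g(2)] by simp
  moreover have "inv g (inv g (g x)) \<noteq> g x" using inv g(3) by metis
  ultimately show ?thesis using consistent_dcycle_orbit_arcs[OF G_inv[OF g(1)]] by simp
qed

lemma consistent_dcycle_image:
  assumes "k \<in> G" "consistent_dcycle V E G D"
  shows "consistent_dcycle V E G (map_prod k k ` D)"
proof -
  obtain g x where g: "g \<in> G" "E x (g x)" "g (g x) \<noteq> x" "D = orbit_arcs g x"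
    using assms(2) by (rule consistent_dcycleE)
  let ?h = "k \<circ> g \<circ> inv k"
  have conj: "?h (k y) = k (g y)" for y using G_bij[OF assms(1)] by (simp add: bij_is_inj)
  have "map_prod k k ` D = orbit_arcs ?h (k x)"
    using image_orbit_arcs[OF G_permutation[OF g(1)] G_bij[OF assms(1)]] g(4) by simp
  moreover have "?h \<in> G" using G_comp G_inv assms(1) g(1) by simp
  moreover have "E (k x) (?h (k x))" using conj G_edge[OF assms(1) g(2)] by simp
  moreover have "?h (?h (k x)) \<noteq> k x"
    using conj g(3) bij_is_inj[OF G_bij[OF assms(1)]] by (metis injD)
  ultimately show ?thesis using consistent_dcycle_orbit_arcs by simp
qed

lemma consistent_ucycle_iff:
  "consistent_ucycle V E G C \<longleftrightarrow> (\<exists>D. C = undirect D \<and> consistent_dcycle V E G D)"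
  unfolding consistent_ucycle_def using consistent_dcycle_converse by blast

lemma orbit_arcs_eq_imp_eq:
  assumes "f \<in> G" "f' \<in> G" "E x (f x)" "orbit_arcs f x = orbit_arcs f' x'"
  shows "f = f'"
proof -
  have "y \<in> orbit f x \<Longrightarrow> f y = f' y" for y
    using assms(4) orbit_arcs_iff[of y "f y" f x] orbit_arcs_iff[of y "f y" f' x'] by simp
  then show ?thesis
    using G_eq_on_arc[OF assms(1-3)] permutation_self_in_orbit[OF G_permutation[OF assms(1)]]
    by (metis orbit.base)
qed

lemma involution_swapping_arc:
  assumes "a \<in> G" "E u v" "a u = v" "a v = u"
  shows "a \<circ> a = id"
  using G_eq_on_arc[OF G_comp[OF assms(1) assms(1)] G_id assms(2)] assms(3,4) by simp

lemma reversal_conjugates_shunt_to_inverse: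
  assumes s: "s \<in> G" and g: "g \<in> G" and edge: "E u (s u)"
    and rev: "map_prod g g ` orbit_arcs s u = converse (orbit_arcs s u)"
  shows "g \<circ> s \<circ> inv g = inv s" and "g u \<in> orbit s u"
proof -
  have perm: "permutation s" using G_permutation[OF s] .
  have inv_g: "inv g (g y) = y" for y using G_bij[OF g] by (simp add: bij_is_inj)
  have conj: "g \<circ> s \<circ> inv g \<in> G" using G_comp G_inv g s by simp
  have arcs: "orbit_arcs (g \<circ> s \<circ> inv g) (g u) = orbit_arcs (inv s) (s u)"
    using rev converse_orbit_arcs[OF perm] image_orbit_arcs[OF perm G_bij[OF g]] by simp
  show conj_inv: "g \<circ> s \<circ> inv g = inv s"
    using orbit_arcs_eq_imp_eq[OF conj G_inv[OF s] _ arcs] inv_g G_edge[OF g edge] by simp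
  have "g u \<in> orbit (g \<circ> s \<circ> inv g) (g u)"
    using permutation_self_in_orbit G_permutation conj by metis
  then show "g u \<in> orbit s u"
    using arcs orbit_arcs_iff orbit_inv_eq[OF perm] permutation_orbit_step[OF perm] conj_inv by metis
qed

lemma reversible_orbit_arcs_iff:
  assumes s: "s \<in> G" and a: "a \<in> G" and edge: "E u (s u)"
    and swap: "a u = s u" "a (s u) = u"
  shows "(\<exists>g\<in>G. map_prod g g ` orbit_arcs s u = converse (orbit_arcs s u))
    \<longleftrightarrow> (s \<circ> a) \<circ> (s \<circ> a) = id"
proof -
  have perm: "permutation s" using G_permutation[OF s] .
  have inv_s: "inv s (s y) = y" "s (inv s y) = y" for y
    using G_bij[OF s] by (simp_all add: bij_is_inj bij_is_surj surj_f_inv_f)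
  have aa: "a \<circ> a = id" using involution_swapping_arc[OF a edge swap] .
  show ?thesis
  proof
    assume "\<exists>g\<in>G. map_prod g g ` orbit_arcs s u = converse (orbit_arcs s u)"
    then obtain g where g: "g \<in> G"
      and rev: "map_prod g g ` orbit_arcs s u = converse (orbit_arcs s u)" by blast
    have inv_g: "inv g (g y) = y" for y using G_bij[OF g] by (simp add: bij_is_inj)
    have gs: "g (s y) = inv s (g y)" for y
      using reversal_conjugates_shunt_to_inverse(1)[OF s g edge rev] by (metis comp_apply inv_g)
    have "s u \<in> orbit s (g u)"
      using reversal_conjugates_shunt_to_inverse(2)[OF s g edge rev]
        orbit_cyclic_eq3[OF cyclic_on_orbit'[OF perm]] by (metis orbit.base)
    then obtain m where m: "(s ^^ m) (g u) = s u"
      by (auto simp: orbit_altdef_permutation[OF perm])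
    (* Correcting g by a power of s gives an element that still inverts s and swaps u and s u. *)
    define b where "b = (s ^^ m) \<circ> g"
    have bs: "b (s y) = inv s (b y)" for y
      using gs funpow_swap1 inv_s by (metis b_def comp_apply)
    have "b = a"
    proof (rule G_eq_on_arc[OF _ a edge])
      show "b \<in> G" unfolding b_def using G_comp G_funpow g s by simp
      show "b u = a u" using m swap by (simp add: b_def)
      then show "b (s u) = a (s u)" using bs swap inv_s by simp
    qed
    then have "s (a (s (a y))) = y" for y using bs inv_s aa by (metis comp_apply id_apply)
    then show "(s \<circ> a) \<circ> (s \<circ> a) = id" by auto
  next
    assume "(s \<circ> a) \<circ> (s \<circ> a) = id"
    then have "s (a (s (a y))) = y" for y by (metis comp_apply id_apply)
    moreover have "inv a = a" using aa by (simp add: inv_unique_comp)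
    ultimately have "a \<circ> s \<circ> inv a = inv s" using inv_s by (metis comp_apply ext)
    then have "map_prod a a ` orbit_arcs s u = converse (orbit_arcs s u)"
      using image_orbit_arcs[OF perm G_bij[OF a]] converse_orbit_arcs[OF perm] swap(1) by simp
    then show "\<exists>g\<in>G. map_prod g g ` orbit_arcs s u = converse (orbit_arcs s u)" using a by blast
  qed
qed

lemma consistent_dcycle_eq_through_arc:
  assumes D: "consistent_dcycle V E G D" and same_edges: "undirect D = undirect (orbit_arcs s x)"
    and s: "s \<in> G" "E x (s x)" "s (s x) \<noteq> x" and arc: "(x, s x) \<in> D"
  shows "D = orbit_arcs s x"
proof -
  obtain t y where t: "t \<in> G" "E y (t y)" "D = orbit_arcs t y"
    using D by (rule consistent_dcycleE)
  have x: "x \<in> orbit t y" "t x = s x" using arc t(3) by (simp_all add: orbit_arcs_iff)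
  have "(s x, s (s x)) \<in> orbit_arcs s x" by (simp add: orbit_arcs_iff orbit.base)
  then have "{s x, s (s x)} \<in> undirect D"
    using same_edges by (metis doubleton_in_undirect_iff)
  then have "t (s x) = s (s x) \<or> t (s (s x)) = s x"
    using t(3) by (auto simp: doubleton_in_undirect_iff orbit_arcs_iff)
  moreover have "t (s (s x)) \<noteq> s x"
    using x(2) s(3) bij_is_inj[OF G_bij[OF t(1)]] by (metis injD)
  ultimately have "t = s" using G_eq_on_arc[OF t(1) s(1) s(2)] x(2) by metis
  moreover have "orbit t y = orbit t x"
    using orbit_cyclic_eq3[OF cyclic_on_orbit'[OF G_permutation[OF t(1)]] x(1)] by simp
  ultimately show ?thesis using t(3) by (simp add: orbit_arcs_def)
qed

lemma consistent_dcycle_undirect_eq: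
  assumes "consistent_dcycle V E G D" "consistent_dcycle V E G D'" "undirect D = undirect D'"
  shows "D = D' \<or> D = converse D'"
proof -
  obtain s x where s: "s \<in> G" "E x (s x)" "s (s x) \<noteq> x" "D' = orbit_arcs s x"
    using assms(2) by (rule consistent_dcycleE)
  have "{x, s x} \<in> undirect D"
    using assms(3) s(4) permutation_self_in_orbit[OF G_permutation[OF s(1)]]
    by (auto simp: doubleton_in_undirect_iff orbit_arcs_iff)
  then consider "(x, s x) \<in> D" | "(x, s x) \<in> converse D"
    by (auto simp: doubleton_in_undirect_iff)
  then show ?thesis
  proof cases
    case 1
    then show ?thesis using consistent_dcycle_eq_through_arc[OF assms(1) _ s(1-3)] assms(3) s(4) by simp
  next
    case 2
    have "undirect (converse D) = undirect (orbit_arcs s x)"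
      using assms(3) s(4) by (simp add: undirect_converse)
    then have "converse D = D'"
      using consistent_dcycle_eq_through_arc[OF consistent_dcycle_converse[OF assms(1)] _ s(1-3)] 2 s(4)
      by simp
    then show ?thesis by auto
  qed
qed

lemma symmetric_ucycle_reversible:
  assumes "consistent_dcycle V E G D" "symmetric_ucycle V E G (undirect D)"
  shows "\<exists>g\<in>G. map_prod g g ` D = converse D"
proof -
  obtain D' g where D': "undirect D = undirect D'" "consistent_dcycle V E G D'"
    and g: "g \<in> G" "map_prod g g ` D' = converse D'"
    using assms(2) unfolding symmetric_ucycle_def by blast
  have "D' = D \<or> D' = converse D"
    using consistent_dcycle_undirect_eq[OF D'(2) assms(1)] D'(1) by simp
  then have "map_prod g g ` D = converse D"
    using g(2) image_map_prod_converse by (metis converse_converse)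
  then show ?thesis using g(1) by blast
qed

(* Shunts of the consistent cycles through the arc (u, v); by arc-regularity such a shunt is
   determined by the vertex s v that follows v on the cycle. *)
definition arc_shunts :: "'a \<Rightarrow> 'a \<Rightarrow> ('a \<Rightarrow> 'a) set" where
  "arc_shunts u v = {s \<in> G. s u = v \<and> s v \<noteq> u}"

lemma consistent_dcycle_arc_shunt:
  assumes "E u v" "s \<in> arc_shunts u v"
  shows "consistent_dcycle V E G (orbit_arcs s u)"
  using assms consistent_dcycle_orbit_arcs by (simp add: arc_shunts_def)

lemma consistent_dcycle_normal_form:
  assumes "E u v" "consistent_dcycle V E G D"
  obtains k s where "k \<in> G" "s \<in> arc_shunts u v" "map_prod k k ` D = orbit_arcs s u"
proof -
  obtain g x where g: "g \<in> G" "E x (g x)" "g (g x) \<noteq> x" "D = orbit_arcs g x"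
    using assms(2) by (rule consistent_dcycleE)
  obtain k where k: "k \<in> G" "k x = u" "k (g x) = v"
    using G_arc_transitive[OF g(2) assms(1)] .
  let ?s = "k \<circ> g \<circ> inv k"
  have conj: "?s (k y) = k (g y)" for y using G_bij[OF k(1)] by (simp add: bij_is_inj)
  have "?s \<in> G" using G_comp[OF G_comp[OF k(1) g(1)] G_inv[OF k(1)]] .
  moreover have "?s u = v" using conj[of x] k by simp
  moreover have "?s v \<noteq> u"
    using conj[of "g x"] k g(3) bij_is_inj[OF G_bij[OF k(1)]] by (metis injD)
  ultimately have "?s \<in> arc_shunts u v" by (simp add: arc_shunts_def)
  moreover have "map_prod k k ` D = orbit_arcs ?s u"
    using image_orbit_arcs[OF G_permutation[OF g(1)] G_bij[OF k(1)]] g(4) k(2) by simp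
  ultimately show ?thesis using that k(1) by blast
qed

lemma stabilizer_involutive_if_all_symmetric:
  assumes edge: "E u v" and sym: "\<forall>C. consistent_ucycle V E G C \<longrightarrow> symmetric_ucycle V E G C"
    and h: "h \<in> G" "h v = v"
  shows "h \<circ> h = id"
proof (cases "h u = u")
  case True
  then show ?thesis using G_eq_on_arc[OF h(1) G_id edge] h(2) by simp
next
  case False
  obtain a where a: "a \<in> G" "a u = v" "a v = u"
    using G_arc_transitive[OF edge edge_sym[OF edge]] .
  have "h \<circ> a \<in> arc_shunts u v" using G_comp h a False by (simp add: arc_shunts_def)
  then have D: "consistent_dcycle V E G (orbit_arcs (h \<circ> a) u)"
    using consistent_dcycle_arc_shunt edge by blast
  then have "consistent_ucycle V E G (undirect (orbit_arcs (h \<circ> a) u))"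
    unfolding consistent_ucycle_iff by blast
  then have "symmetric_ucycle V E G (undirect (orbit_arcs (h \<circ> a) u))" using sym by blast
  moreover have "E u ((h \<circ> a) u)" "a u = (h \<circ> a) u" "a ((h \<circ> a) u) = u"
    using edge a h(2) by simp_all
  ultimately have "(h \<circ> a \<circ> a) \<circ> (h \<circ> a \<circ> a) = id"
    using symmetric_ucycle_reversible[OF D] reversible_orbit_arcs_iff[OF G_comp[OF h(1) a(1)] a(1)]
    by blast
  then show ?thesis using involution_swapping_arc[OF a(1) edge a(2,3)] by (simp add: comp_assoc)
qed

lemma symmetric_if_stabilizer_involutive:
  assumes edge: "E u v" and involutive: "\<forall>h\<in>G. h v = v \<longrightarrow> h \<circ> h = id"
    and C: "consistent_ucycle V E G C"
  shows "symmetric_ucycle V E G C"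
proof -
  obtain a where a: "a \<in> G" "a u = v" "a v = u"
    using G_arc_transitive[OF edge edge_sym[OF edge]] .
  obtain D where D: "C = undirect D" "consistent_dcycle V E G D"
    using C consistent_ucycle_iff by blast
  obtain k s where k: "k \<in> G" and "s \<in> arc_shunts u v" and kD: "map_prod k k ` D = orbit_arcs s u"
    using consistent_dcycle_normal_form[OF edge D(2)] .
  then have s: "s \<in> G" "s u = v" by (simp_all add: arc_shunts_def)
  have "(s \<circ> a) \<circ> (s \<circ> a) = id" using involutive G_comp[OF s(1) a(1)] s(2) a(3) by simp
  moreover have "E u (s u)" "a u = s u" "a (s u) = u" using edge a s(2) by simp_all
  ultimately obtain g where g: "g \<in> G" "map_prod g g ` orbit_arcs s u = converse (orbit_arcs s u)"
    using reversible_orbit_arcs_iff[OF s(1) a(1)] by blast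
  have "map_prod (inv k \<circ> g \<circ> k) (inv k \<circ> g \<circ> k) ` D = converse D"
    using reversal_conjugate[OF G_bij[OF k]] g(2) kD by simp
  moreover have "inv k \<circ> g \<circ> k \<in> G" using G_comp G_inv g(1) k by simp
  ultimately show ?thesis unfolding symmetric_ucycle_def using D by blast
qed

lemma all_symmetric_iff_stabilizer_involutive:
  assumes "E u v"
  shows "(\<forall>C. consistent_ucycle V E G C \<longrightarrow> symmetric_ucycle V E G C)
    \<longleftrightarrow> (\<forall>h\<in>G. h v = v \<longrightarrow> h \<circ> h = id)"
  using stabilizer_involutive_if_all_symmetric[OF assms] symmetric_if_stabilizer_involutive[OF assms]
  by blast

lemma ucycle_orbit_image:
  assumes "k \<in> G"
  shows "ucycle_orbit G (ucycle_image k C) = ucycle_orbit G C"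
proof -
  have comp: "ucycle_image g (ucycle_image h C) = ucycle_image (g \<circ> h) C" for g h
    by (simp add: ucycle_image_def image_image image_comp)
  have cancel: "g \<circ> inv k \<circ> k = g" for g
    using bij_is_inj[OF G_bij[OF assms]] by (simp add: comp_assoc)
  have "ucycle_image g C = ucycle_image (g \<circ> inv k) (ucycle_image k C)" for g
    by (simp only: comp cancel)
  then show ?thesis
    unfolding ucycle_orbit_def using comp G_comp G_inv assms by blast
qed

lemma consistent_orbits_eq_image:
  assumes edge: "E u v"
  shows "consistent_orbits V E G = (\<lambda>s. ucycle_orbit G (undirect (orbit_arcs s u))) ` arc_shunts u v"
proof
  show "consistent_orbits V E G \<subseteq> (\<lambda>s. ucycle_orbit G (undirect (orbit_arcs s u))) ` arc_shunts u v"
  proof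
    fix Orb assume "Orb \<in> consistent_orbits V E G"
    then obtain D where Orb: "Orb = ucycle_orbit G (undirect D)" and D: "consistent_dcycle V E G D"
      unfolding consistent_orbits_def consistent_ucycle_iff by blast
    obtain k s where k: "k \<in> G" and s: "s \<in> arc_shunts u v" and kD: "map_prod k k ` D = orbit_arcs s u"
      using consistent_dcycle_normal_form[OF edge D] .
    have "Orb = ucycle_orbit G (undirect (orbit_arcs s u))"
      using Orb ucycle_orbit_image[OF k, of "undirect D"] kD by (simp add: ucycle_image_undirect)
    then show "Orb \<in> (\<lambda>s. ucycle_orbit G (undirect (orbit_arcs s u))) ` arc_shunts u v"
      using s by blast
  qed
  show "(\<lambda>s. ucycle_orbit G (undirect (orbit_arcs s u))) ` arc_shunts u v \<subseteq> consistent_orbits V E G"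
    unfolding consistent_orbits_def consistent_ucycle_iff
    using consistent_dcycle_arc_shunt[OF edge] by blast
qed

lemma arc_shunts_eq_of_image:
  assumes edge: "E u v" and k: "k \<in> G" and s: "s \<in> arc_shunts u v" and s': "s' \<in> arc_shunts u v"
    and image: "map_prod k k ` orbit_arcs s u = orbit_arcs s' u"
  shows "s = s'"
proof -
  have sG: "s \<in> G" "s u = v" and s'G: "s' \<in> G" "s' u = v"
    using s s' by (simp_all add: arc_shunts_def)
  let ?t = "k \<circ> s \<circ> inv k"
  have conj: "?t (k y) = k (s y)" for y using G_bij[OF k] by (simp add: bij_is_inj)
  have arcs: "orbit_arcs ?t (k u) = orbit_arcs s' u"
    using image image_orbit_arcs[OF G_permutation[OF sG(1)] G_bij[OF k]] by simp
  have "?t \<in> G" using G_comp[OF G_comp[OF k sG(1)] G_inv[OF k]] .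
  moreover have "E (k u) (?t (k u))" using conj[of u] G_edge[OF k edge] sG(2) by simp
  ultimately have t: "?t = s'" using orbit_arcs_eq_imp_eq[OF _ s'G(1) _ arcs] by blast
  have "(u, v) \<in> orbit_arcs s' u"
    using permutation_self_in_orbit[OF G_permutation[OF s'G(1)]] s'G(2) by (simp add: orbit_arcs_iff)
  then obtain z where z: "z \<in> orbit s u" "k z = u" "k (s z) = v"
    using image by (force simp: orbit_arcs_iff)
  then obtain i where i: "z = (s ^^ i) u"
    by (auto simp: orbit_altdef_permutation[OF G_permutation[OF sG(1)]])
  have "k \<circ> s ^^ i = id"
  proof (rule G_eq_on_arc[OF G_comp[OF k G_funpow[OF sG(1)]] G_id edge])
    show "(k \<circ> s ^^ i) u = id u" using z(2) i by simp
    show "(k \<circ> s ^^ i) v = id v" using z(3) i sG(2) by (simp add: funpow_swap1)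
  qed
  then have "k ((s ^^ i) y) = y" for y by (metis comp_apply id_apply)
  moreover have "s' v = k (s (s z))" using t conj[of "s z"] z(3) by metis
  ultimately have "s' v = s v" using i sG(2) by (metis funpow_swap1)
  then show ?thesis using G_eq_on_arc[OF sG(1) s'G(1) edge] sG(2) s'G(2) by simp
qed

lemma inj_on_arc_shunts:
  assumes edge: "E u v" and sym: "\<forall>C. consistent_ucycle V E G C \<longrightarrow> symmetric_ucycle V E G C"
  shows "inj_on (\<lambda>s. ucycle_orbit G (undirect (orbit_arcs s u))) (arc_shunts u v)"
proof (rule inj_onI)
  fix s s' assume s: "s \<in> arc_shunts u v" and s': "s' \<in> arc_shunts u v"
    and eq: "ucycle_orbit G (undirect (orbit_arcs s u)) = ucycle_orbit G (undirect (orbit_arcs s' u))"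
  let ?D = "orbit_arcs s u" and ?D' = "orbit_arcs s' u"
  have D: "consistent_dcycle V E G ?D" and D': "consistent_dcycle V E G ?D'"
    using consistent_dcycle_arc_shunt[OF edge] s s' by blast+
  have "ucycle_image id (undirect ?D') = undirect ?D'" by (simp add: ucycle_image_def)
  then have "undirect ?D' \<in> ucycle_orbit G (undirect ?D)"
    using eq G_id unfolding ucycle_orbit_def by blast
  then obtain k where k: "k \<in> G" and "undirect ?D' = ucycle_image k (undirect ?D)"
    unfolding ucycle_orbit_def by blast
  then have "undirect (map_prod k k ` ?D) = undirect ?D'" by (simp add: ucycle_image_undirect)
  then have cases: "map_prod k k ` ?D = ?D' \<or> map_prod k k ` ?D = converse ?D'"
    using consistent_dcycle_undirect_eq[OF consistent_dcycle_image[OF k D] D'] by simp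
  obtain g where g: "g \<in> G" "map_prod g g ` ?D = converse ?D"
    using symmetric_ucycle_reversible[OF D] sym consistent_ucycle_iff D by blast
  have "map_prod (k \<circ> g) (k \<circ> g) ` ?D = map_prod k k ` map_prod g g ` ?D"
    by (simp only: image_comp map_prod.comp)
  also have "\<dots> = converse (map_prod k k ` ?D)"
    using g(2) by (simp add: image_map_prod_converse)
  finally have flip: "map_prod (k \<circ> g) (k \<circ> g) ` ?D = converse (map_prod k k ` ?D)" .
  have "\<exists>k'\<in>G. map_prod k' k' ` ?D = ?D'"
  proof (cases "map_prod k k ` ?D = ?D'")
    case False
    then have "map_prod (k \<circ> g) (k \<circ> g) ` ?D = ?D'" using cases flip by simp
    then show ?thesis using G_comp[OF k g(1)] by blast
  qed (use k in blast)
  then show "s = s'" using arc_shunts_eq_of_image[OF edge _ s s'] by blast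
qed

lemma card_arc_shunts:
  assumes edge: "E u v"
  shows "card (arc_shunts u v) = card {w. E v w} - 1"
proof -
  have bij: "bij_betw (\<lambda>s. s v) {s \<in> G. s u = v} {w. E v w}"
    using bij_betw_eval_arc[OF edge] .
  have image: "(\<lambda>s. s v) ` arc_shunts u v = {w. E v w} - {u}"
    using bij_betw_imp_surj_on[OF bij] by (auto simp: arc_shunts_def)
  have "bij_betw (\<lambda>s. s v) (arc_shunts u v) ({w. E v w} - {u})"
    using bij_betw_subset[OF bij _ image] by (auto simp: arc_shunts_def)
  then have "card (arc_shunts u v) = card ({w. E v w} - {u})" by (rule bij_betw_same_card)
  also have "\<dots> = card {w. E v w} - 1"
    using edge_sym[OF edge] by (simp add: card_Diff_singleton)
  finally show ?thesis .
qed

lemma card_consistent_orbits: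
  assumes "E u v" "\<forall>C. consistent_ucycle V E G C \<longrightarrow> symmetric_ucycle V E G C"
  shows "card (consistent_orbits V E G) = card {w. E v w} - 1"
  using consistent_orbits_eq_image[OF assms(1)] card_image[OF inj_on_arc_shunts[OF assms]]
    card_arc_shunts[OF assms(1)] by simp

lemma group_stabilizer_group: "group (stabilizer_group G v)"
proof (rule groupI)
  fix g assume "g \<in> carrier (stabilizer_group G v)"
  then have g: "g \<in> G" "g v = v" by (simp_all add: stabilizer_group_def)
  have inj: "inj g" using G_bij[OF g(1)] by (rule bij_is_inj)
  have "inv g \<in> G" "inv g v = v" "inv g \<circ> g = id"
    using G_inv[OF g(1)] inv_f_eq[OF inj g(2)] inv_o_cancel[OF inj] by simp_all
  then show "\<exists>h\<in>carrier (stabilizer_group G v). h \<otimes>\<^bsub>stabilizer_group G v\<^esub> g = \<one>\<^bsub>stabilizer_group G v\<^esub>"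
    by (auto simp: stabilizer_group_def)
qed (auto simp: stabilizer_group_def G_comp G_id comp_assoc)

lemma stabilizer_iso_Z2_Z2_iff:
  assumes "E u v" "card {w. E v w} = 4"
  shows "stabilizer_group G v \<cong> integer_mod_group 2 \<times>\<times> integer_mod_group 2
    \<longleftrightarrow> (\<forall>h\<in>G. h v = v \<longrightarrow> h \<circ> h = id)"
proof -
  have "card {g \<in> G. g v = v} = card {w. E v w}"
    using bij_betw_same_card[OF bij_betw_eval_arc[OF edge_sym[OF assms(1)]]] .
  then have "card (carrier (stabilizer_group G v)) = 4"
    using assms(2) by (simp add: stabilizer_group_def)
  then show ?thesis
    using group.iso_Z2_Z2_iff_exponent_two[OF group_stabilizer_group] by (auto simp: stabilizer_group_def)
qed

end

theorem lemma1p3: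
  fixes V :: "'a set" and E :: "'a \<Rightarrow> 'a \<Rightarrow> bool" and G :: "('a \<Rightarrow> 'a) set"
  assumes "simple_graph V E" and "V \<noteq> {}" and "tetravalent V E"
    and "aut_subgroup V E G" and "arc_regular V E G"
  shows "(card (consistent_orbits V E G) = 3 \<and>
          (\<forall>C. consistent_ucycle V E G C \<longrightarrow> symmetric_ucycle V E G C))
     \<longleftrightarrow> (\<forall>v\<in>V. stabilizer_group G v \<cong> integer_mod_group 2 \<times>\<times> integer_mod_group 2)"
proof -
  interpret arc_regular_graph V E G
    using assms(1,4,5) by unfold_locales
  have degree: "card {w. E v w} = 4" if "v \<in> V" for v
    using assms(3) that by (simp add: tetravalent_def)
  have neighbour: "\<exists>u. E u v" if "v \<in> V" for v
    using degree[OF that] edge_sym by (metis (mono_tags) Collect_empty_eq card.empty zero_neq_numeral)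
  let ?all_symmetric = "\<forall>C. consistent_ucycle V E G C \<longrightarrow> symmetric_ucycle V E G C"
  have stabilizer_iff: "stabilizer_group G v \<cong> integer_mod_group 2 \<times>\<times> integer_mod_group 2
      \<longleftrightarrow> ?all_symmetric" if "v \<in> V" for v
    using neighbour[OF that] degree[OF that]
      stabilizer_iso_Z2_Z2_iff all_symmetric_iff_stabilizer_involutive by metis
  obtain u v where edge: "E u v" using assms(2) neighbour by blast
  have "?all_symmetric \<Longrightarrow> card (consistent_orbits V E G) = 3"
    using card_consistent_orbits[OF edge] degree edge_vertices[OF edge] by simp
  then show ?thesis using stabilizer_iff edge edge_vertices by blast
qed

end
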